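(* Let $H:\mathbb{C}^{n_1\times\dots\times n_d}\to\mathbb{C}^{n_1\times\dots\times n_d}$ be linear and self-adjoint ($\langle H[Y],Z\rangle=\langle Y,H[Z]\rangle$ for all $Y,Z$), and let $\mathrm{E}(Y)=\langle Y,H[Y]\rangle$. Run the rank-augmenting TTN integrator (described in the context) on the maximal tree $\bar\tau$ with an orthonormal starting TTN $Y_{\bar\tau}^0$ of full tree rank and the function $F(t,Y)=-\mathrm{i}\,H[Y]$ (the tensor Schrödinger equation $\mathrm{i}\dot A=H[A]$), over a step $t_0<t_1$ of arbitrary step size $h=t_1-t_0$. Then the rank-augmented result $\widehat Y_{\bar\tau}^1$ satisfies $\mathrm{E}(\widehat Y_{\bar\tau}^1)=\mathrm{E}(Y_{\bar\tau}^0)$.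
   Context: Tensor notation: for a tensor with modes indexed $0,1,\dots,m$, $\mathrm{mat}_i$ is the mode-$i$ matricization (rows indexed by the $i$th index) and $\mathrm{ten}_i$ its inverse; $A\times_i\mathbf{B}$ is the mode-$i$ product, $\mathrm{mat}_i(A\times_i\mathbf{B})=\mathbf{B}\,\mathrm{mat}_i(A)$; $\times_{i=1}^m$ denotes successive products in modes $1,\dots,m$; ${}^*$ is conjugate transpose; $\|\cdot\|$ and $\langle X,Y\rangle=\sum \overline{x}\,y$ are the Euclidean norm and inner product of the vectors of entries. Trees: given a finite leaf set $\mathcal{L}=\{1,\dots,d\}$, each leaf $l$ is a tree with leaf set $\{l\}$; if $\tau_1,\dots,\tau_m$ ($m\ge2$) are trees with pairwise disjoint leaf sets, the ordered tuple $\tau=(\tau_1,\dots,\tau_m)$ is a tree whose leaf set is their union; the $\tau_i$ are its direct subtrees, and subtrees are defined recursively ($\sigma\le\tau$, $\sigma<\tau$ if also $\sigma\ne\tau$). Fix a tree $\bar\tau$ with leaf set $\mathcal{L}$. Tree tensor networks (TTN): given dimensions $n_l$ and ranks $r_\sigma$ ($\sigma\le\bar\tau$, $r_{\bar\tau}=1$), basis matrices $\mathbf{U}_l\in\mathbb{C}^{n_l\times r_l}$ at leaves and connection tensors $C_\tau\in\mathbb{C}^{r_\tau\times r_{\tau_1}\times\dots\times r_{\tau_m}}$ of full multilinear rank at non-leaf subtrees $\tau=(\tau_1,\dots,\tau_m)$, set $X_l=\mathbf{U}_l^\top$, $X_\tau=C_\tau\times_0\mathbf{I}_{r_\tau}\times_{i=1}^m\mathbf{U}_{\tau_i}\in\mathcal{V}_\tau:=\mathbb{C}^{r_\tau\times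 n_{\tau_1}\times\dots\times n_{\tau_m}}$ with $n_\tau=\prod_i n_{\tau_i}$, and $\mathbf{U}_\tau=\mathrm{mat}_0(X_\tau)^\top\in\mathbb{C}^{n_\tau\times r_\tau}$; for a leaf, $\mathcal{V}_l:=\mathbb{C}^{r_l\times n_l}$. The TTN is orthonormal if every $\mathbf{U}_\sigma$, $\sigma<\bar\tau$, has orthonormal columns. Full tree rank means all connection tensors have full multilinear rank. $\mathcal{V}_{\bar\tau}$ is identified with $\mathbb{C}^{n_1\times\dots\times n_d}$. Reduced operators and starting values: for a non-leaf $\tau=(\tau_1,\dots,\tau_m)$, a function $F_\tau:[t_0,t_1]\times\mathcal{V}_\tau\to\mathcal{V}_\tau$ and a starting TTN $Y_\tau^0=C_\tau^0\times_0\mathbf{I}_{r_\tau}\times_{i=1}^m\mathbf{U}_{\tau_i}^0$ with $\mathbf{U}_{\tau_i}^0=\mathrm{mat}_0(X_{\tau_i}^0)^\top$, compute QR decompositions $\mathrm{mat}_i(C_\tau^0)^\top=\mathbf{Q}_{\tau_i}^0\mathbf{S}_{\tau_i}^{0,\top}$, let $\mathbf{V}_{\tau_i}^0=\mathrm{mat}_i\big(\mathrm{ten}_i(\mathbf{Q}_{\tau_i}^{0,\top})\times_0\mathbf{I}_{r_\tau}\times_{j\ne i}\mathbf{U}_{\tau_j}^0\big)^\top$, prolongation $\pi_{\tau,i}(Y)=\mathrm{ten}_i\big((\mathbf{V}_{\tau_i}^0\mathrm{mat}_0(Y))^\top\big)$ for $Y\in\mathcal{V}_{\tau_i}$, restriction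 $\pi_{\tau,i}^\dagger(Z)=\mathrm{ten}_0\big((\mathrm{mat}_i(Z)\mathbf{V}_{\tau_i}^0)^\top\big)$ for $Z\in\mathcal{V}_\tau$, and set $F_{\tau_i}(t,Y)=\pi_{\tau,i}^\dagger(F_\tau(t,\pi_{\tau,i}(Y)))$ and $Y_{\tau_i}^0=X_{\tau_i}^0\times_0\mathbf{S}_{\tau_i}^{0,\top}$. Rank-augmenting TTN integrator on $(\tau,Y_\tau^0,F_\tau,t_0,t_1)$, $\tau$ non-leaf: (1) for each $i$: if $\tau_i=l$ is a leaf, solve $\dot Y_l=F_l(t,Y_l)$, $Y_l(t_0)=Y_l^0$, let $\widehat{\mathbf{U}}_l$ have orthonormal columns spanning the range of $(Y_l(t_1)^\top,\mathbf{U}_l^0)$, and $\widehat{\mathbf{M}}_l=\widehat{\mathbf{U}}_l^*\mathbf{U}_l^0$; otherwise call the integrator recursively on $(\tau_i,Y_{\tau_i}^0,F_{\tau_i},t_0,t_1)$, obtaining $\widehat Y_{\tau_i}^1$ (with root connection tensor $\widehat C_{\tau_i}^1$) and $\widehat C_{\tau_i}^0$, let $\widehat{\mathbf{Q}}_{\tau_i}$ have orthonormal columns spanning the range of $(\mathrm{mat}_0(\widehat C_{\tau_i}^1)^\top,\mathrm{mat}_0(\widehat C_{\tau_i}^0)^\top)$, let $\widehat X_{\tau_i}$ be $\widehat Y_{\tau_i}^1$ with root connection tensor replaced by $\mathrm{ten}_0(\widehat{\mathbf{Q}}_{\tau_i}^\top)$, and set $\widehat{\mathbf{U}}_{\tau_i}=\mathrm{mat}_0(\widehat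 X_{\tau_i})^\top$, $\widehat{\mathbf{M}}_{\tau_i}=\widehat{\mathbf{U}}_{\tau_i}^*\mathbf{U}_{\tau_i}^0$. (2) Set $\widehat C_\tau^0=C_\tau^0\times_{i=1}^m\widehat{\mathbf{M}}_{\tau_i}$, solve $\dot{\widehat C}_\tau(t)=F_\tau\big(t,\widehat C_\tau(t)\times_0\mathbf{I}_{r_\tau}\times_{i=1}^m\widehat{\mathbf{U}}_{\tau_i}\big)\times_{i=1}^m\widehat{\mathbf{U}}_{\tau_i}^*$, $\widehat C_\tau(t_0)=\widehat C_\tau^0$, set $\widehat C_\tau^1=\widehat C_\tau(t_1)$, and return $\widehat Y_\tau^1=\widehat C_\tau^1\times_0\mathbf{I}_{r_\tau}\times_{i=1}^m\widehat{\mathbf{U}}_{\tau_i}$ and $\widehat C_\tau^0$. At the top level, $F_{\bar\tau}=F$ and $Y_{\bar\tau}^0$ is the given starting TTN. All differential equations are assumed to be solved exactly. *)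

theory Defs
  imports "HOL-Analysis.Analysis" "HOL-Library.FuncSet"
begin

datatype tree = Leaf nat | Node "tree list"

fun leaves :: "tree \<Rightarrow> nat set" where
  "leaves (Leaf l) = {l}"
| "leaves (Node cs) = \<Union> (set (map leaves cs))"

fun wf_tree :: "tree \<Rightarrow> bool" where
  "wf_tree (Leaf l) = True"
| "wf_tree (Node cs) = (2 \<le> length cs
      \<and> (\<forall>i<length cs. \<forall>j<length cs. i \<noteq> j \<longrightarrow> leaves (cs!i) \<inter> leaves (cs!j) = {})
      \<and> list_all wf_tree cs)"

fun subtrees :: "tree \<Rightarrow> tree set" where
  "subtrees (Leaf l) = {Leaf l}"
| "subtrees (Node cs) = insert (Node cs) (\<Union> (set (map subtrees cs)))"

text \<open>Multi-indices are functions from mode labels to indices (extensional: undefined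
 outside the label set).  An element of V_tau (or a connection tensor) is a function
 of the mode-0 index and a multi-index over the remaining modes.  For V_tau the remaining
 modes are labelled by the leaves of tau (so n_tau is never flattened); for connection
 tensors they are labelled by child positions 0..m-1.\<close>

type_synonym midx = "nat \<Rightarrow> nat"
type_synonym gten = "nat \<Rightarrow> midx \<Rightarrow> complex"

definition MI :: "(nat \<Rightarrow> nat) \<Rightarrow> nat set \<Rightarrow> midx set" where
  "MI dims L = Pi\<^sub>E L (\<lambda>l. {..<dims l})"

text \<open>C x_0 I x_{i=1..m} U_i, where the i-th basis is given in transposed form X_i
 (X_i c a = U_i(a,c)), Ls!i the leaf set of the i-th child, rs!i its rank.\<close>
definition comb :: "gten \<Rightarrow> gten list \<Rightarrow> nat list \<Rightarrow> nat set list \<Rightarrow> gten" where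
  "comb C Xs rs Ls = (\<lambda>k a. \<Sum>c\<in>MI (\<lambda>i. rs!i) {..<length Xs}.
       C k c * (\<Prod>i<length Xs. (Xs!i) (c i) (restrict a (Ls!i))))"

text \<open>C x_{i=1..m} M_i with matrices M_i (row, column).\<close>
definition cmult :: "gten \<Rightarrow> (nat \<Rightarrow> nat \<Rightarrow> complex) list \<Rightarrow> nat list \<Rightarrow> gten" where
  "cmult C Ms rs = (\<lambda>k c'. \<Sum>c\<in>MI (\<lambda>i. rs!i) {..<length rs}.
       C k c * (\<Prod>i<length rs. (Ms!i) (c' i) (c i)))"

text \<open>Z x_{i=1..m} U_i^* for Z in V_tau.\<close>
definition proj :: "(nat \<Rightarrow> nat) \<Rightarrow> gten \<Rightarrow> gten list \<Rightarrow> nat set list \<Rightarrow> gten" where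
  "proj n Z Xs Ls = (\<lambda>k c'. \<Sum>a\<in>MI n (\<Union>(set Ls)).
       Z k a * (\<Prod>i<length Xs. cnj ((Xs!i) (c' i) (restrict a (Ls!i)))))"

text \<open>Y x_0 S^T (S a q x q matrix).\<close>
definition sred :: "(nat \<Rightarrow> nat \<Rightarrow> complex) \<Rightarrow> nat \<Rightarrow> gten \<Rightarrow> gten" where
  "sred S q X = (\<lambda>s b. \<Sum>s'<q. S s' s * X s' b)"

text \<open>The matrix U^* W, both given in transposed form over multi-indices M.\<close>
definition mhat :: "midx set \<Rightarrow> gten \<Rightarrow> gten \<Rightarrow> nat \<Rightarrow> nat \<Rightarrow> complex" where
  "mhat M Xh X0 = (\<lambda>c' c. \<Sum>a\<in>M. cnj (Xh c' a) * X0 c a)"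

definition orth :: "midx set \<Rightarrow> gten \<Rightarrow> nat \<Rightarrow> bool" where
  "orth M A p = (\<forall>c<p. \<forall>c'<p. (\<Sum>a\<in>M. cnj (A c a) * A c' a) = (if c = c' then 1 else 0))"

definition cols_span_eq :: "midx set \<Rightarrow> gten \<Rightarrow> nat \<Rightarrow> gten \<Rightarrow> nat \<Rightarrow> bool" where
  "cols_span_eq M A p B q =
     ((\<forall>x. \<exists>y. \<forall>a\<in>M. (\<Sum>c<p. x c * A c a) = (\<Sum>c<q. y c * B c a)) \<and>
      (\<forall>y. \<exists>x. \<forall>a\<in>M. (\<Sum>c<p. x c * A c a) = (\<Sum>c<q. y c * B c a)))"

definition join :: "gten \<Rightarrow> gten \<Rightarrow> nat \<Rightarrow> gten" where
  "join A B q = (\<lambda>c. if c < q then A c else B (c - q))"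

text \<open>Full multilinear rank of a connection tensor (r_tau x rs!0 x ... ): every
 matricization has linearly independent rows.\<close>
definition full_mlrank :: "gten \<Rightarrow> nat \<Rightarrow> nat list \<Rightarrow> bool" where
  "full_mlrank C rt rs =
     ((\<forall>x. (\<forall>c\<in>MI (\<lambda>i. rs!i) {..<length rs}. (\<Sum>k<rt. x k * C k c) = 0)
            \<longrightarrow> (\<forall>k<rt. x k = 0)) \<and>
      (\<forall>i<length rs. \<forall>x. (\<forall>k<rt. \<forall>c\<in>MI (\<lambda>i. rs!i) {..<length rs}.
            (\<Sum>s<rs!i. x s * C k (c(i:=s))) = 0) \<longrightarrow> (\<forall>s<rs!i. x s = 0)))"

definition solves :: "(real \<Rightarrow> gten) \<Rightarrow> (real \<Rightarrow> gten \<Rightarrow> gten) \<Rightarrow> real \<Rightarrow> real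
      \<Rightarrow> gten \<Rightarrow> nat \<Rightarrow> midx set \<Rightarrow> bool" where
  "solves Y F t0 t1 Y0 q M =
     ((\<forall>k<q. \<forall>a\<in>M. Y t0 k a = Y0 k a) \<and>
      (\<forall>t\<in>{t0..t1}. \<forall>k<q. \<forall>a\<in>M.
          ((\<lambda>s. Y s k a) has_vector_derivative F t (Y t) k a) (at t within {t0..t1})))"

text \<open>X_sigma of a TTN with leaf bases U_l (n_l x r_l matrices, row, column),
 connection tensors Cn and ranks r.\<close>
fun X0 :: "(tree \<Rightarrow> gten) \<Rightarrow> (nat \<Rightarrow> nat \<Rightarrow> nat \<Rightarrow> complex) \<Rightarrow> (tree \<Rightarrow> nat) \<Rightarrow> tree \<Rightarrow> gten" where
  "X0 Cn Ul r (Leaf l) = (\<lambda>k a. Ul l (a l) k)"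
| "X0 Cn Ul r (Node cs) = comb (Cn (Node cs)) (map (X0 Cn Ul r) cs) (map r cs) (map leaves cs)"

text \<open>QR decomposition mat_i(C)^T = Q S^T, with Q stored as the tensor ten_i(Q^T)
 (same shape as C) and S^T upper triangular.\<close>
definition qr_cond :: "nat \<Rightarrow> nat list \<Rightarrow> gten \<Rightarrow> nat \<Rightarrow> gten \<Rightarrow> (nat \<Rightarrow> nat \<Rightarrow> complex) \<Rightarrow> bool" where
  "qr_cond rt rs C i Qt S =
     ((\<forall>k<rt. \<forall>c\<in>MI (\<lambda>j. rs!j) {..<length rs}.
          C k c = (\<Sum>s<rs!i. Qt k (c(i:=s)) * S (c i) s)) \<and>
      (\<forall>p<rs!i. \<forall>q<rs!i. p < q \<longrightarrow> S p q = 0) \<and>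
      (\<forall>s<rs!i. \<forall>s'<rs!i.
          (\<Sum>k<rt. \<Sum>c\<in>{c\<in>MI (\<lambda>j. rs!j) {..<length rs}. c i = s}.
              cnj (Qt k c) * Qt k (c(i:=s'))) = (if s = s' then 1 else 0)))"

text \<open>The matrix V_{tau_i}^0, as function of (k, a) (row, a multi-index over the leaves
 of tau of which only the part outside tau_i matters) and s (column).\<close>
definition Vq :: "nat list \<Rightarrow> gten list \<Rightarrow> nat set list \<Rightarrow> gten \<Rightarrow> nat \<Rightarrow> nat \<Rightarrow> midx \<Rightarrow> nat \<Rightarrow> complex" where
  "Vq rs X0s Ls Qt i k a s = (\<Sum>c\<in>{c\<in>MI (\<lambda>j. rs!j) {..<length rs}. c i = s}.
       Qt k c * (\<Prod>j\<in>{..<length rs} - {i}. (X0s!j) (c j) (restrict a (Ls!j))))"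

definition prol :: "nat list \<Rightarrow> gten list \<Rightarrow> nat set list \<Rightarrow> gten \<Rightarrow> nat \<Rightarrow> gten \<Rightarrow> gten" where
  "prol rs X0s Ls Qt i Y = (\<lambda>k a. \<Sum>s<rs!i. Vq rs X0s Ls Qt i k a s * Y s (restrict a (Ls!i)))"

definition merge :: "nat set \<Rightarrow> midx \<Rightarrow> midx \<Rightarrow> midx" where
  "merge L b a' = (\<lambda>l. if l \<in> L then b l else a' l)"

definition restr :: "(nat \<Rightarrow> nat) \<Rightarrow> nat \<Rightarrow> nat list \<Rightarrow> gten list \<Rightarrow> nat set list \<Rightarrow> gten \<Rightarrow> nat \<Rightarrow> gten \<Rightarrow> gten" where
  "restr n rt rs X0s Ls Qt i Z = (\<lambda>s b. \<Sum>k<rt. \<Sum>a'\<in>MI n (\<Union>(set Ls) - Ls!i).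
       Z k (merge (Ls!i) b a') * Vq rs X0s Ls Qt i k (merge (Ls!i) b a') s)"

definition redF :: "(nat \<Rightarrow> nat) \<Rightarrow> nat \<Rightarrow> nat list \<Rightarrow> gten list \<Rightarrow> nat set list \<Rightarrow> gten \<Rightarrow> nat
      \<Rightarrow> (real \<Rightarrow> gten \<Rightarrow> gten) \<Rightarrow> real \<Rightarrow> gten \<Rightarrow> gten" where
  "redF n rt rs X0s Ls Qt i F = (\<lambda>t Y. restr n rt rs X0s Ls Qt i (F t (prol rs X0s Ls Qt i Y)))"

text \<open>integ n Cn Ul r t0 t1 tau C F C1 C0 Xh rh: a run of the integrator on
 (tau, Y_tau^0, F_tau, t0, t1), where Y_tau^0 has root connection tensor C and the
 subtree bases of the original TTN below; it returns the root connection tensors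
 C1 (of Y-hat^1_tau) and C0 (= C-hat^0_tau), the augmented child bases Xh!i
 (transposed: Xh!i c a = U-hat_{tau_i}(a,c)) and the augmented ranks rh!i.
 The choices of orthonormal bases and QR factors are arbitrary.\<close>
inductive integ :: "(nat \<Rightarrow> nat) \<Rightarrow> (tree \<Rightarrow> gten) \<Rightarrow> (nat \<Rightarrow> nat \<Rightarrow> nat \<Rightarrow> complex)
    \<Rightarrow> (tree \<Rightarrow> nat) \<Rightarrow> real \<Rightarrow> real \<Rightarrow> tree \<Rightarrow> gten \<Rightarrow> (real \<Rightarrow> gten \<Rightarrow> gten)
    \<Rightarrow> gten \<Rightarrow> gten \<Rightarrow> gten list \<Rightarrow> nat list \<Rightarrow> bool"
  for n Cn Ul r t0 t1 where
  step: "\<lbrakk> length Xh = length cs; length rh = length cs;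
     \<forall>i<length cs. \<exists>Qt S.
        qr_cond (r (Node cs)) (map r cs) C i Qt S \<and>
        (\<forall>l. cs!i = Leaf l \<longrightarrow>
           (\<exists>Y. solves Y (redF n (r (Node cs)) (map r cs) (map (X0 Cn Ul r) cs) (map leaves cs) Qt i F)
                   t0 t1 (sred S (r (cs!i)) (X0 Cn Ul r (cs!i))) (r (cs!i)) (MI n {l})
             \<and> orth (MI n {l}) (Xh!i) (rh!i)
             \<and> cols_span_eq (MI n {l}) (Xh!i) (rh!i)
                  (join (Y t1) (X0 Cn Ul r (cs!i)) (r (cs!i))) (2 * r (cs!i)))) \<and>
        (\<forall>cs'. cs!i = Node cs' \<longrightarrow>
           (\<exists>C1' C0' Xs' rs' Qh.
              integ n Cn Ul r t0 t1 (cs!i) (sred S (r (cs!i)) (Cn (cs!i)))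
                 (redF n (r (Node cs)) (map r cs) (map (X0 Cn Ul r) cs) (map leaves cs) Qt i F)
                 C1' C0' Xs' rs'
            \<and> orth (MI (\<lambda>j. rs'!j) {..<length cs'}) Qh (rh!i)
            \<and> cols_span_eq (MI (\<lambda>j. rs'!j) {..<length cs'}) Qh (rh!i)
                 (join C1' C0' (r (cs!i))) (2 * r (cs!i))
            \<and> Xh!i = comb Qh Xs' rs' (map leaves cs')));
     C0 = cmult C (map (\<lambda>i. mhat (MI n (leaves (cs!i))) (Xh!i) (X0 Cn Ul r (cs!i))) [0..<length cs])
                (map r cs);
     solves Ch (\<lambda>t Cc. proj n (F t (comb Cc Xh rh (map leaves cs))) Xh (map leaves cs))
        t0 t1 C0 (r (Node cs)) (MI (\<lambda>i. rh!i) {..<length cs});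
     C1 = Ch t1 \<rbrakk>
   \<Longrightarrow> integ n Cn Ul r t0 t1 (Node cs) C F C1 C0 Xh rh"

definition inner_on :: "midx set \<Rightarrow> (midx \<Rightarrow> complex) \<Rightarrow> (midx \<Rightarrow> complex) \<Rightarrow> complex" where
  "inner_on M Y Z = (\<Sum>a\<in>M. cnj (Y a) * Z a)"

definition energy :: "midx set \<Rightarrow> ((midx \<Rightarrow> complex) \<Rightarrow> (midx \<Rightarrow> complex)) \<Rightarrow> (midx \<Rightarrow> complex) \<Rightarrow> complex" where
  "energy M H Y = inner_on M Y (H Y)"

end

theory Submission
  imports Defs "Jordan_Normal_Form.Determinant"
begin

text \<open>
  The augmented basis of each child \<open>\<tau>\<^sub>i\<close> of the root is orthonormal, and its range contains
  the range of the initial basis \<open>U\<^sup>0\<^sub>i\<close>. At a leaf this is built into the augmentation. At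
  an inner node it follows from the same statement one level down: the augmented starting
  connection tensor of \<open>\<tau>\<^sub>i\<close>, expanded in the augmented bases below it, reproduces \<open>U\<^sup>0\<^sub>i\<close>
  multiplied by the QR factor \<open>S\<close>, and \<open>S\<close> is invertible because the connection tensors have
  full multilinear rank (a property that the reduction by \<open>S\<close> hands down to the next level).
  Projecting \<open>U\<^sup>0\<^sub>i\<close> onto the augmented basis is therefore exact, so the starting value of the
  root step equals \<open>Y\<^sup>0\<close>.

  The root step is the Galerkin projection of \<open>i A' = H[A]\<close> onto a fixed space spanned by
  products \<open>b\<^sub>c\<close> of the augmented bases. The coefficients satisfy \<open>c' = -i w\<^sub>c\<close> with
  \<open>w\<^sub>c = \<langle>b\<^sub>c, H Y\<rangle>\<close>, so by self-adjointness the derivative of \<open>\<langle>Y, H Y\<rangle>\<close> is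
  \<open>\<Sum>\<^sub>c (-i |w\<^sub>c|\<^sup>2 + i |w\<^sub>c|\<^sup>2) = 0\<close>. Neither part uses the orthonormality of the initial network.
\<close>

section \<open>Multi-indices\<close>

lemma finite_MI: "finite L \<Longrightarrow> finite (MI n L)"
  unfolding MI_def by (auto intro!: finite_PiE)

lemma restrict_in_MI: "a \<in> MI n L \<Longrightarrow> L' \<subseteq> L \<Longrightarrow> restrict a L' \<in> MI n L'"
  unfolding MI_def by auto

lemma restrict_nth_in_MI:
  assumes "a \<in> MI n (\<Union>(set Ls))" "i < length Ls"
  shows "restrict a (Ls!i) \<in> MI n (Ls!i)"
  using assms(1) by (rule restrict_in_MI) (rule Union_upper, rule nth_mem, fact)

lemma inj_on_restrict_MI:
  "inj_on (\<lambda>a. \<lambda>i\<in>{..<length Ls}. restrict a (Ls!i)) (MI n (\<Union>(set Ls)))"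
    (is "inj_on ?psi _")
proof (rule inj_onI)
  fix a a' assume a: "a \<in> MI n (\<Union>(set Ls))" and a': "a' \<in> MI n (\<Union>(set Ls))"
    and eq: "?psi a = ?psi a'"
  show "a = a'"
  proof (rule PiE_ext[OF a[unfolded MI_def] a'[unfolded MI_def]])
    fix l assume "l \<in> \<Union>(set Ls)"
    then obtain i where i: "i < length Ls" "l \<in> Ls!i" by (auto simp: in_set_conv_nth)
    from eq have "?psi a i l = ?psi a' i l" by simp
    with i show "a l = a' l" by simp
  qed
qed

lemma bij_betw_restrict_MI:
  assumes disj: "disjoint_family_on (\<lambda>i. Ls!i) {..<length Ls}"
  shows "bij_betw (\<lambda>a. \<lambda>i\<in>{..<length Ls}. restrict a (Ls!i))
           (MI n (\<Union>(set Ls))) (PiE {..<length Ls} (\<lambda>i. MI n (Ls!i)))"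
    (is "bij_betw ?psi _ _")
proof (rule bij_betw_imageI)
  show "inj_on ?psi (MI n (\<Union>(set Ls)))"
    by (rule inj_on_restrict_MI)
  show "?psi ` MI n (\<Union>(set Ls)) = PiE {..<length Ls} (\<lambda>i. MI n (Ls!i))"
  proof
    show "?psi ` MI n (\<Union>(set Ls)) \<subseteq> PiE {..<length Ls} (\<lambda>i. MI n (Ls!i))"
      by (rule image_subsetI) (simp add: restrict_nth_in_MI)
    show "PiE {..<length Ls} (\<lambda>i. MI n (Ls!i)) \<subseteq> ?psi ` MI n (\<Union>(set Ls))"
    proof
      fix \<beta> assume \<beta>: "\<beta> \<in> PiE {..<length Ls} (\<lambda>i. MI n (Ls!i))"
      define owner where "owner l = (SOME i. i < length Ls \<and> l \<in> Ls!i)" for l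
      define a where "a = (\<lambda>l\<in>\<Union>(set Ls). \<beta> (owner l) l)"
      have a_eq: "a l = \<beta> i l" if "i < length Ls" "l \<in> Ls!i" for i l
      proof -
        have "owner l < length Ls \<and> l \<in> Ls!owner l"
          unfolding owner_def by (rule someI_ex) (use that in blast)
        then have "owner l = i" using disj that unfolding disjoint_family_on_def by blast
        then show ?thesis using that unfolding a_def by auto
      qed
      have "a \<in> MI n (\<Union>(set Ls))"
        unfolding MI_def
      proof (rule PiE_I)
        fix l assume "l \<in> \<Union>(set Ls)"
        then obtain i where i: "i < length Ls" "l \<in> Ls!i" by (auto simp: in_set_conv_nth)
        with \<beta> have "\<beta> i l \<in> {..<n l}" by (auto simp: MI_def)
        with a_eq[OF i] show "a l \<in> {..<n l}" by simp
      qed (simp add: a_def)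
      moreover have "?psi a = \<beta>"
      proof (rule PiE_ext[OF _ \<beta>])
        show "?psi a \<in> PiE {..<length Ls} (\<lambda>i. MI n (Ls!i))"
          using \<open>a \<in> MI n _\<close> by (simp add: restrict_nth_in_MI)
        fix i assume i: "i \<in> {..<length Ls}"
        have "?psi a i \<in> MI n (Ls!i)" "\<beta> i \<in> MI n (Ls!i)"
          using \<open>a \<in> MI n _\<close> \<beta> i by (auto simp: restrict_nth_in_MI)
        then show "?psi a i = \<beta> i"
          unfolding MI_def by (rule PiE_ext) (use i a_eq in simp)
      qed
      ultimately show "\<beta> \<in> ?psi ` MI n (\<Union>(set Ls))" by blast
    qed
  qed
qed

lemma sum_MI_Union_prod:
  fixes g :: "nat \<Rightarrow> midx \<Rightarrow> 'a :: comm_semiring_1"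
  assumes disj: "disjoint_family_on (\<lambda>i. Ls!i) {..<length Ls}"
    and fin: "\<forall>i<length Ls. finite (Ls!i)"
  shows "(\<Sum>a\<in>MI n (\<Union>(set Ls)). \<Prod>i<length Ls. g i (restrict a (Ls!i)))
       = (\<Prod>i<length Ls. \<Sum>b\<in>MI n (Ls!i). g i b)"
proof -
  have "(\<Prod>i<length Ls. \<Sum>b\<in>MI n (Ls!i). g i b)
      = (\<Sum>\<beta>\<in>PiE {..<length Ls} (\<lambda>i. MI n (Ls!i)). \<Prod>i<length Ls. g i (\<beta> i))"
    by (rule prod_sum_PiE) (auto intro: finite_MI simp: fin)
  also have "\<dots> = (\<Sum>a\<in>MI n (\<Union>(set Ls)). \<Prod>i<length Ls. g i (restrict a (Ls!i)))"
    by (subst sum.reindex_bij_betw[OF bij_betw_restrict_MI[OF disj], symmetric]) simp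
  finally show ?thesis ..
qed

section \<open>Orthonormal bases and their spans\<close>

lemma prod_indicator_eq_PiE:
  assumes "d \<in> PiE I A" "e \<in> PiE I A" "finite I"
  shows "(\<Prod>j\<in>I. if d j = e j then 1 else 0 :: 'a :: comm_semiring_1) = (if d = e then 1 else 0)"
proof (cases "d = e")
  case False
  then obtain j where "j \<in> I" "d j \<noteq> e j" using PiE_ext[OF assms(1,2)] by blast
  then have "(\<Prod>j\<in>I. if d j = e j then 1 else 0 :: 'a) = 0"
    using assms(3) by (intro prod_zero) auto
  with False show ?thesis by simp
qed simp

lemma orth_prod:
  assumes orthX: "\<forall>j<length Ls. orth (MI n (Ls!j)) (Xs!j) (rs!j)"
    and d: "d \<in> MI (\<lambda>j. rs!j) {..<length Ls}" and e: "e \<in> MI (\<lambda>j. rs!j) {..<length Ls}"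
  shows "(\<Prod>j<length Ls. \<Sum>b\<in>MI n (Ls!j). cnj ((Xs!j) (d j) b) * (Xs!j) (e j) b)
      = (if d = e then 1 else 0)"
proof -
  have "(\<Prod>j<length Ls. \<Sum>b\<in>MI n (Ls!j). cnj ((Xs!j) (d j) b) * (Xs!j) (e j) b)
      = (\<Prod>j<length Ls. if d j = e j then 1 else 0)"
  proof (rule prod.cong[OF refl])
    fix j assume j: "j \<in> {..<length Ls}"
    moreover have "d j < rs!j" "e j < rs!j" using d e j unfolding MI_def by auto
    ultimately show "(\<Sum>b\<in>MI n (Ls!j). cnj ((Xs!j) (d j) b) * (Xs!j) (e j) b)
        = (if d j = e j then 1 else 0)"
      using orthX unfolding orth_def by auto
  qed
  also have "\<dots> = (if d = e then 1 else 0)"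
    using d e unfolding MI_def by (intro prod_indicator_eq_PiE) auto
  finally show ?thesis .
qed

lemma orth_comb:
  assumes disj: "disjoint_family_on (\<lambda>i. Ls!i) {..<length Ls}"
    and fin: "\<forall>i<length Ls. finite (Ls!i)"
    and len: "length Xs = length Ls" "length rs = length Ls"
    and orthX: "\<forall>j<length Ls. orth (MI n (Ls!j)) (Xs!j) (rs!j)"
    and orthQ: "orth (MI (\<lambda>j. rs!j) {..<length Ls}) Q p"
  shows "orth (MI n (\<Union>(set Ls))) (comb Q Xs rs Ls) p"
  unfolding orth_def
proof (intro allI impI)
  fix c c' assume c: "c < p" and c': "c' < p"
  define D where "D = MI (\<lambda>j. rs!j) {..<length Ls}"
  have finD: "finite D" unfolding D_def by (simp add: finite_MI)
  have "(\<Sum>a\<in>MI n (\<Union>(set Ls)). cnj (comb Q Xs rs Ls c a) * comb Q Xs rs Ls c' a)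
     = (\<Sum>a\<in>MI n (\<Union>(set Ls)). \<Sum>d\<in>D. \<Sum>e\<in>D. cnj (Q c d) * Q c' e *
          (\<Prod>j<length Ls. cnj ((Xs!j) (d j) (restrict a (Ls!j))) * (Xs!j) (e j) (restrict a (Ls!j))))"
    unfolding comb_def D_def len
    by (simp add: sum_distrib_left sum_distrib_right prod.distrib mult_ac)
  also have "\<dots> = (\<Sum>d\<in>D. \<Sum>e\<in>D. cnj (Q c d) * Q c' e *
          (\<Sum>a\<in>MI n (\<Union>(set Ls)). \<Prod>j<length Ls.
             cnj ((Xs!j) (d j) (restrict a (Ls!j))) * (Xs!j) (e j) (restrict a (Ls!j))))"
    by (simp add: sum_distrib_left sum.swap[of _ "MI n (\<Union>(set Ls))"]
        sum.swap[of _ "MI n (\<Union>(set Ls))" D])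
  also have "\<dots> = (\<Sum>d\<in>D. \<Sum>e\<in>D. cnj (Q c d) * Q c' e *
          (\<Prod>j<length Ls. \<Sum>b\<in>MI n (Ls!j). cnj ((Xs!j) (d j) b) * (Xs!j) (e j) b))"
  proof (intro sum.cong refl arg_cong[where f="\<lambda>x. _ * x"])
    fix d e
    show "(\<Sum>a\<in>MI n (\<Union>(set Ls)). \<Prod>j<length Ls.
             cnj ((Xs!j) (d j) (restrict a (Ls!j))) * (Xs!j) (e j) (restrict a (Ls!j)))
        = (\<Prod>j<length Ls. \<Sum>b\<in>MI n (Ls!j). cnj ((Xs!j) (d j) b) * (Xs!j) (e j) b)"
      by (rule sum_MI_Union_prod[OF disj fin])
  qed
  also have "\<dots> = (\<Sum>d\<in>D. \<Sum>e\<in>D. if d = e then cnj (Q c d) * Q c' e else 0)"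
    by (intro sum.cong refl) (simp add: D_def orth_prod[OF orthX])
  also have "\<dots> = (\<Sum>d\<in>D. cnj (Q c d) * Q c' d)"
    by (intro sum.cong refl) (simp add: finD)
  also have "\<dots> = (if c = c' then 1 else 0)"
    using orthQ c c' unfolding orth_def D_def by auto
  finally show "(\<Sum>a\<in>MI n (\<Union>(set Ls)). cnj (comb Q Xs rs Ls c a) * comb Q Xs rs Ls c' a)
      = (if c = c' then 1 else 0)" .
qed

definition in_span :: "midx set \<Rightarrow> gten \<Rightarrow> nat \<Rightarrow> (midx \<Rightarrow> complex) \<Rightarrow> bool" where
  "in_span M X p v \<longleftrightarrow> (\<exists>y. \<forall>b\<in>M. v b = (\<Sum>c<p. y c * X c b))"

definition augments :: "midx set \<Rightarrow> gten \<Rightarrow> nat \<Rightarrow> gten \<Rightarrow> nat \<Rightarrow> bool" where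
  "augments M Xh p X q \<longleftrightarrow> orth M Xh p \<and> (\<forall>c<q. in_span M Xh p (X c))"

lemma orth_expansion:
  assumes orth: "orth M X p" and span: "in_span M X p v" and b: "b \<in> M"
  shows "(\<Sum>c<p. (\<Sum>a\<in>M. cnj (X c a) * v a) * X c b) = v b"
proof -
  obtain y where y: "\<forall>b\<in>M. v b = (\<Sum>c<p. y c * X c b)"
    using span unfolding in_span_def by blast
  have coeff: "(\<Sum>a\<in>M. cnj (X c a) * v a) = y c" if "c < p" for c
  proof -
    have "(\<Sum>a\<in>M. cnj (X c a) * v a) = (\<Sum>c'<p. y c' * (\<Sum>a\<in>M. cnj (X c a) * X c' a))"
      using y by (simp add: sum_distrib_left sum.swap[of _ M] mult_ac)
    also have "\<dots> = (\<Sum>c'<p. if c' = c then y c' else 0)"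
      using orth that unfolding orth_def by (intro sum.cong) auto
    also have "\<dots> = y c"
      using that by simp
    finally show ?thesis .
  qed
  then show ?thesis using y b by simp
qed

lemma comb_cmult_mhat:
  assumes len: "length Xh = m" "length rh = m" "length X0s = m" "length rs = m" "length Ls = m"
    and Ms: "\<forall>i<m. Ms!i = mhat (MI n (Ls!i)) (Xh!i) (X0s!i)"
    and aug: "\<forall>i<m. augments (MI n (Ls!i)) (Xh!i) (rh!i) (X0s!i) (rs!i)"
    and a: "a \<in> MI n (\<Union>(set Ls))"
  shows "comb (cmult C Ms rs) Xh rh Ls k a = comb C X0s rs Ls k a"
proof -
  have expand: "(\<Sum>c'<rh!i. (Ms!i) c' c * (Xh!i) c' (restrict a (Ls!i))) = (X0s!i) c (restrict a (Ls!i))"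
    if i: "i < m" and c: "c < rs!i" for i c
  proof -
    have "restrict a (Ls!i) \<in> MI n (Ls!i)"
      using a i len by (simp add: restrict_nth_in_MI)
    with aug i c show ?thesis
      unfolding Ms[rule_format, OF i] mhat_def augments_def by (auto intro: orth_expansion)
  qed
  have "comb (cmult C Ms rs) Xh rh Ls k a
      = (\<Sum>c'\<in>MI (\<lambda>i. rh!i) {..<m}. \<Sum>c\<in>MI (\<lambda>i. rs!i) {..<m}.
           C k c * (\<Prod>i<m. (Ms!i) (c' i) (c i) * (Xh!i) (c' i) (restrict a (Ls!i))))"
    unfolding comb_def cmult_def len
    by (simp add: sum_distrib_right sum_distrib_left prod.distrib mult_ac)
  also have "\<dots> = (\<Sum>c\<in>MI (\<lambda>i. rs!i) {..<m}. C k c *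
          (\<Sum>c'\<in>MI (\<lambda>i. rh!i) {..<m}. \<Prod>i<m. (Ms!i) (c' i) (c i) * (Xh!i) (c' i) (restrict a (Ls!i))))"
    by (simp add: sum.swap[of _ "MI (\<lambda>i. rh!i) {..<m}"] sum_distrib_left)
  also have "\<dots> = (\<Sum>c\<in>MI (\<lambda>i. rs!i) {..<m}. C k c *
       (\<Prod>i<m. \<Sum>c'<rh!i. (Ms!i) c' (c i) * (Xh!i) c' (restrict a (Ls!i))))"
    unfolding MI_def by (intro sum.cong refl arg_cong[where f="\<lambda>x. _ * x"] prod_sum_PiE[symmetric]) auto
  also have "\<dots> = comb C X0s rs Ls k a"
    unfolding comb_def len
    by (intro sum.cong refl arg_cong[where f="\<lambda>x. _ * x"] prod.cong expand) (auto simp: MI_def)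
  finally show ?thesis .
qed

lemma comb_sred: "comb (sred S q C) Xs rs Ls k a = (\<Sum>s<q. S s k * comb C Xs rs Ls s a)"
  unfolding comb_def sred_def
  by (simp add: sum_distrib_left sum_distrib_right sum.swap[of _ "{..<q}"] mult_ac)

lemma sum_comb: "(\<Sum>c\<in>A. x c * comb Q Xs rs Ls c a) = comb (\<lambda>_ d. \<Sum>c\<in>A. x c * Q c d) Xs rs Ls k a"
  unfolding comb_def
  by (simp add: sum_distrib_left sum_distrib_right sum.swap[of _ A] mult_ac)

lemma comb_cong:
  "\<forall>d\<in>MI (\<lambda>i. rs!i) {..<length Xs}. Q k d = Q' k' d \<Longrightarrow> comb Q Xs rs Ls k a = comb Q' Xs rs Ls k' a"
  unfolding comb_def by (auto intro!: sum.cong)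

lemma in_span_join_right:
  assumes "cols_span_eq M X p (Defs.join A B q) (2 * q)"
  shows "in_span M X p (\<lambda>a. \<Sum>k<q. y k * B k a)"
proof -
  define x where "x c = (if q \<le> c then y (c - q) else 0)" for c
  have "(\<Sum>c<2 * q. x c * Defs.join A B q c a) = (\<Sum>k<q. y k * B k a)" for a
  proof -
    have "(\<Sum>c<2 * q. x c * Defs.join A B q c a) = (\<Sum>c\<in>{q..<q + q}. x c * Defs.join A B q c a)"
      unfolding x_def by (intro sum.mono_neutral_right) auto
    also have "\<dots> = (\<Sum>k<q. y k * B k a)"
      using sum.shift_bounds_nat_ivl[of "\<lambda>c. x c * Defs.join A B q c a" 0 q q]
      by (simp add: x_def Defs.join_def atLeast0LessThan add.commute)
    finally show ?thesis .
  qed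
  moreover obtain z where "\<forall>a\<in>M. (\<Sum>c<p. z c * X c a) = (\<Sum>c<2 * q. x c * Defs.join A B q c a)"
    using assms unfolding cols_span_eq_def by blast
  ultimately show ?thesis
    unfolding in_span_def by (intro exI[of _ z]) auto
qed

lemma augments_if_cols_span_join:
  assumes "orth M X p" "cols_span_eq M X p (Defs.join A B q) (2 * q)"
  shows "augments M X p B q"
  unfolding augments_def
proof (intro conjI allI impI)
  fix c assume "c < q"
  then have "(\<Sum>k<q. (if k = c then 1 else 0) * B k a) = B c a" for a
    by (simp add: if_distrib[of "\<lambda>z. z * _"] cong: if_cong)
  with in_span_join_right[OF assms(2), of "\<lambda>k. if k = c then 1 else 0"]
  show "in_span M X p (B c)"
    by simp
qed (fact assms(1))

section \<open>Invertibility of the QR factors\<close>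

definition rows_independent :: "(nat \<Rightarrow> nat \<Rightarrow> complex) \<Rightarrow> nat \<Rightarrow> bool" where
  "rows_independent S q \<longleftrightarrow> (\<forall>x. (\<forall>s<q. (\<Sum>s'<q. x s' * S s' s) = 0) \<longrightarrow> (\<forall>s'<q. x s' = 0))"

lemma rows_independent_solvable:
  assumes "rows_independent S q"
  shows "\<exists>y. \<forall>s<q. (\<Sum>s'<q. S s s' * y s') = v s"
proof -
  define A where "A = Matrix.mat q q (\<lambda>(i, j). S i j)"
  have A: "A \<in> carrier_mat q q" unfolding A_def by simp
  have "det (transpose_mat A) \<noteq> 0"
  proof
    assume "det (transpose_mat A) = 0"
    then obtain x where x: "x \<in> carrier_vec q" "x \<noteq> 0\<^sub>v q" "transpose_mat A *\<^sub>v x = 0\<^sub>v q"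
      using det_0_iff_vec_prod_zero[of "transpose_mat A" q] A by auto
    have "(\<Sum>s'<q. vec_index x s' * S s' s) = 0" if s: "s < q" for s
    proof -
      have "vec_index (transpose_mat A *\<^sub>v x) s = (\<Sum>s'<q. S s' s * vec_index x s')"
        using s x(1) unfolding A_def
        by (auto simp: mult_mat_vec_def scalar_prod_def lessThan_atLeast0 intro!: sum.cong)
      with x(3) s show ?thesis by (simp add: mult.commute)
    qed
    with assms have "\<forall>s'<q. vec_index x s' = 0" unfolding rows_independent_def by blast
    with x(1,2) show False by (auto simp: vec_eq_iff)
  qed
  then have "det A \<noteq> 0" using det_transpose[OF A] by simp
  then obtain B where B: "B \<in> carrier_mat q q" "A * B = 1\<^sub>m q"
    using det_non_zero_imp_unit[OF A, of "()"] unfolding Units_def ring_mat_def by auto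
  define w where "w = B *\<^sub>v vec q v"
  have "A *\<^sub>v w = (A * B) *\<^sub>v vec q v"
    unfolding w_def using A B(1) by simp
  also have "\<dots> = vec q v"
    using B(2) by simp
  finally have Aw: "A *\<^sub>v w = vec q v" .
  have "(\<Sum>s'<q. S s s' * vec_index w s') = v s" if s: "s < q" for s
  proof -
    have "vec_index (A *\<^sub>v w) s = (\<Sum>s'<q. S s s' * vec_index w s')"
      using s B(1) unfolding A_def w_def
      by (auto simp: mult_mat_vec_def scalar_prod_def lessThan_atLeast0 intro!: sum.cong)
    with Aw s show ?thesis by simp
  qed
  then show ?thesis by (intro exI[of _ "\<lambda>s'. vec_index w s'"]) simp
qed

text \<open>The child-mode part of \<^const>\<open>full_mlrank\<close>: it is what makes the QR factors invertible.\<close>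

definition full_mode_ranks :: "gten \<Rightarrow> nat \<Rightarrow> nat list \<Rightarrow> bool" where
  "full_mode_ranks C rt rs \<longleftrightarrow>
     (\<forall>i<length rs. \<forall>x. (\<forall>k<rt. \<forall>c\<in>MI (\<lambda>i. rs!i) {..<length rs}.
        (\<Sum>s<rs!i. x s * C k (c(i:=s))) = 0) \<longrightarrow> (\<forall>s<rs!i. x s = 0))"

lemma full_mlrank_imp_full_mode_ranks: "full_mlrank C rt rs \<Longrightarrow> full_mode_ranks C rt rs"
  unfolding full_mlrank_def full_mode_ranks_def by (elim conjE)

lemma qr_factor_rows_independent:
  assumes qr: "qr_cond rt rs C i Qt S" and full: "full_mode_ranks C rt rs" and i: "i < length rs"
  shows "rows_independent S (rs!i)"
  unfolding rows_independent_def
proof (intro allI impI)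
  fix x s0 assume hx: "\<forall>s<rs!i. (\<Sum>s'<rs!i. x s' * S s' s) = 0" and s0: "s0 < rs!i"
  have "(\<Sum>s'<rs!i. x s' * C k (c(i:=s'))) = 0"
    if k: "k < rt" and c: "c \<in> MI (\<lambda>j. rs!j) {..<length rs}" for k c
  proof -
    have factor: "C k (c(i:=s')) = (\<Sum>s<rs!i. Qt k (c(i:=s)) * S s' s)" if s': "s' < rs!i" for s'
    proof -
      have "c(i:=s') \<in> MI (\<lambda>j. rs!j) {..<length rs}"
        using c s' i unfolding MI_def by (auto simp: PiE_iff extensional_def)
      with qr k show ?thesis unfolding qr_cond_def by auto
    qed
    have "(\<Sum>s'<rs!i. x s' * C k (c(i:=s')))
        = (\<Sum>s'<rs!i. \<Sum>s<rs!i. x s' * (Qt k (c(i:=s)) * S s' s))"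
      by (intro sum.cong refl) (simp add: factor sum_distrib_left)
    also have "\<dots> = (\<Sum>s<rs!i. Qt k (c(i:=s)) * (\<Sum>s'<rs!i. x s' * S s' s))"
      by (subst sum.swap) (simp add: sum_distrib_left mult_ac)
    also have "\<dots> = 0" using hx by simp
    finally show ?thesis .
  qed
  with full i s0 show "x s0 = 0" unfolding full_mode_ranks_def by auto
qed

lemma full_mode_ranks_sred:
  assumes S: "rows_independent S q" and C: "full_mode_ranks C q rs"
  shows "full_mode_ranks (sred S q C) q rs"
  unfolding full_mode_ranks_def
proof (intro allI impI)
  fix j x s0 assume j: "j < length rs"
    and hx: "\<forall>k<q. \<forall>c\<in>MI (\<lambda>i. rs!i) {..<length rs}. (\<Sum>s<rs!j. x s * sred S q C k (c(j:=s))) = 0"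
    and s0: "s0 < rs!j"
  have "(\<Sum>s<rs!j. x s * C s' (c(j:=s))) = 0"
    if s': "s' < q" and c: "c \<in> MI (\<lambda>i. rs!i) {..<length rs}" for s' c
  proof -
    define v where "v s'' = (\<Sum>s<rs!j. x s * C s'' (c(j:=s)))" for s''
    have "(\<Sum>s''<q. v s'' * S s'' k) = (\<Sum>s<rs!j. x s * sred S q C k (c(j:=s)))" for k
    proof -
      have "(\<Sum>s''<q. v s'' * S s'' k) = (\<Sum>s''<q. \<Sum>s<rs!j. x s * (S s'' k * C s'' (c(j:=s))))"
        unfolding v_def by (simp add: sum_distrib_left sum_distrib_right mult_ac)
      also have "\<dots> = (\<Sum>s<rs!j. x s * sred S q C k (c(j:=s)))"
        unfolding sred_def by (subst sum.swap) (simp add: sum_distrib_left)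
      finally show ?thesis .
    qed
    with hx c have "\<forall>k<q. (\<Sum>s''<q. v s'' * S s'' k) = 0" by simp
    with S have "\<forall>s''<q. v s'' = 0" unfolding rows_independent_def by blast
    with s' show ?thesis unfolding v_def by blast
  qed
  with C j s0 show "x s0 = 0" unfolding full_mode_ranks_def by auto
qed

section \<open>The augmented bases contain the initial ones\<close>

lemma augments_comb:
  assumes disj: "disjoint_family_on (\<lambda>i. Ls!i) {..<length Ls}"
    and fin: "\<forall>i<length Ls. finite (Ls!i)"
    and len: "length Xs = length Ls" "length X0s = length Ls" "length rs = length Ls" "length rs' = length Ls"
    and aug: "\<forall>i<length Ls. augments (MI n (Ls!i)) (Xs!i) (rs'!i) (X0s!i) (rs!i)"
    and C0: "C0 = cmult (sred S q C) Ms rs"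
    and Ms: "\<forall>i<length Ls. Ms!i = mhat (MI n (Ls!i)) (Xs!i) (X0s!i)"
    and orthQ: "orth (MI (\<lambda>i. rs'!i) {..<length Ls}) Q p"
    and spanQ: "cols_span_eq (MI (\<lambda>i. rs'!i) {..<length Ls}) Q p (Defs.join C1 C0 q) (2 * q)"
    and S: "rows_independent S q"
  shows "augments (MI n (\<Union>(set Ls))) (comb Q Xs rs' Ls) p (comb C X0s rs Ls) q"
  unfolding augments_def
proof (intro conjI allI impI)
  show "orth (MI n (\<Union>(set Ls))) (comb Q Xs rs' Ls) p"
    using aug orthQ by (intro orth_comb[OF disj fin]) (auto simp: len augments_def)
  fix c assume c: "c < q"
  obtain y where y: "\<forall>s<q. (\<Sum>k<q. S s k * y k) = (if s = c then 1 else 0)"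
    using rows_independent_solvable[OF S, of "\<lambda>s. if s = c then 1 else 0"] by blast
  obtain x where x: "\<forall>d\<in>MI (\<lambda>i. rs'!i) {..<length Ls}. (\<Sum>k<q. y k * C0 k d) = (\<Sum>c'<p. x c' * Q c' d)"
    using in_span_join_right[OF spanQ, of y] unfolding in_span_def by auto
  have "comb C X0s rs Ls c b = (\<Sum>c'<p. x c' * comb Q Xs rs' Ls c' b)"
    if b: "b \<in> MI n (\<Union>(set Ls))" for b
  proof -
    have "comb C X0s rs Ls c b = (\<Sum>s<q. (\<Sum>k<q. S s k * y k) * comb C X0s rs Ls s b)"
      using y c by (simp add: if_distrib[of "\<lambda>z. z * _"] cong: if_cong)
    also have "\<dots> = (\<Sum>k<q. y k * comb (sred S q C) X0s rs Ls k b)"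
      unfolding comb_sred sum_distrib_left sum_distrib_right by (subst sum.swap) (simp add: mult_ac)
    also have "\<dots> = (\<Sum>k<q. y k * comb C0 Xs rs' Ls k b)"
      unfolding C0 comb_cmult_mhat[OF len(1) len(4) len(2) len(3) refl Ms aug b] ..
    also have "\<dots> = comb (\<lambda>_ d. \<Sum>k<q. y k * C0 k d) Xs rs' Ls 0 b"
      by (rule sum_comb)
    also have "\<dots> = comb (\<lambda>_ d. \<Sum>c'<p. x c' * Q c' d) Xs rs' Ls 0 b"
      using x len by (intro comb_cong) simp
    also have "\<dots> = (\<Sum>c'<p. x c' * comb Q Xs rs' Ls c' b)"
      by (rule sum_comb[symmetric])
    finally show ?thesis .
  qed
  then show "in_span (MI n (\<Union>(set Ls))) (comb Q Xs rs' Ls) p (comb C X0s rs Ls c)"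
    unfolding in_span_def by (intro exI[of _ x]) simp
qed

lemma finite_leaves: "finite (leaves t)"
  by (induction t) auto

lemma subtrees_self: "t \<in> subtrees t"
  by (cases t) auto

inductive_cases integ_NodeE: "integ n Cn Ul r t0 t1 (Node cs) C F C1 C0 Xh rh"

lemma integ_NodeD:
  assumes "integ n Cn Ul r t0 t1 (Node cs) C F C1 C0 Xh rh"
  shows "length Xh = length cs" "length rh = length cs"
    "C0 = cmult C (map (\<lambda>i. mhat (MI n (leaves (cs!i))) (Xh!i) (X0 Cn Ul r (cs!i))) [0..<length cs])
            (map r cs)"
    "\<exists>Ch. solves Ch (\<lambda>t Cc. proj n (F t (comb Cc Xh rh (map leaves cs))) Xh (map leaves cs))
            t0 t1 C0 (r (Node cs)) (MI (\<lambda>i. rh!i) {..<length cs}) \<and> C1 = Ch t1"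
  using assms by (elim integ_NodeE; blast)+

lemma integ_augments_children:
  assumes "integ n Cn Ul r t0 t1 (Node cs) C F C1 C0 Xh rh"
    and "wf_tree (Node cs)"
    and "\<forall>cs'. Node cs' \<in> subtrees (Node cs) \<longrightarrow> full_mlrank (Cn (Node cs')) (r (Node cs')) (map r cs')"
    and "full_mode_ranks C (r (Node cs)) (map r cs)"
  shows "\<forall>i<length cs. augments (MI n (leaves (cs!i))) (Xh!i) (rh!i) (X0 Cn Ul r (cs!i)) (r (cs!i))"
  using assms
proof (induction "Node cs" C F C1 C0 Xh rh arbitrary: cs rule: integ.induct)
  case (step Xh cs rh C F C0 Ch C1)
  show ?case
  proof (intro allI impI)
    fix i assume i: "i < length cs"
    show "augments (MI n (leaves (cs!i))) (Xh!i) (rh!i) (X0 Cn Ul r (cs!i)) (r (cs!i))"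
    proof (cases "cs!i")
      case (Leaf l)
      then obtain Y where "orth (MI n {l}) (Xh!i) (rh!i)"
        and "cols_span_eq (MI n {l}) (Xh!i) (rh!i)
               (Defs.join (Y t1) (X0 Cn Ul r (cs!i)) (r (cs!i))) (2 * r (cs!i))"
        using step.hyps(3) i by blast
      then have "augments (MI n {l}) (Xh!i) (rh!i) (X0 Cn Ul r (cs!i)) (r (cs!i))"
        by (rule augments_if_cols_span_join)
      with Leaf show ?thesis
        by simp
    next
      case (Node cs')
      define q where "q = r (cs!i)"
      obtain Qt S C1' C0' Xs' rs' Qh where qr: "qr_cond (r (Node cs)) (map r cs) C i Qt S"
        and child: "integ n Cn Ul r t0 t1 (Node cs') (sred S q (Cn (cs!i)))
              (redF n (r (Node cs)) (map r cs) (map (X0 Cn Ul r) cs) (map leaves cs) Qt i F)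
              C1' C0' Xs' rs'"
        and IH: "\<forall>x. cs!i = Node x \<longrightarrow> wf_tree (Node x) \<longrightarrow>
              (\<forall>cs''. Node cs'' \<in> subtrees (Node x) \<longrightarrow>
                 full_mlrank (Cn (Node cs'')) (r (Node cs'')) (map r cs'')) \<longrightarrow>
              full_mode_ranks (sred S q (Cn (cs!i))) (r (Node x)) (map r x) \<longrightarrow>
              (\<forall>j<length x. augments (MI n (leaves (x!j))) (Xs'!j) (rs'!j) (X0 Cn Ul r (x!j)) (r (x!j)))"
        and orthQ: "orth (MI (\<lambda>j. rs'!j) {..<length cs'}) Qh (rh!i)"
        and spanQ: "cols_span_eq (MI (\<lambda>j. rs'!j) {..<length cs'}) Qh (rh!i) (Defs.join C1' C0' q) (2 * q)"
        and Xh_i: "Xh!i = comb Qh Xs' rs' (map leaves cs')"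
        using step.hyps(3) i Node unfolding q_def by (smt (verit))
      have "wf_tree (cs!i)"
        using step.prems(1) i by (simp add: list_all_length)
      then have wf: "wf_tree (Node cs')"
        using Node by simp
      have full: "\<forall>cs''. Node cs'' \<in> subtrees (Node cs') \<longrightarrow>
          full_mlrank (Cn (Node cs'')) (r (Node cs'')) (map r cs'')"
        using step.prems(2) nth_mem[OF i] Node by fastforce
      have S: "rows_independent S q"
        using qr_factor_rows_independent[OF qr step.prems(3)] i unfolding q_def by simp
      have "full_mode_ranks (sred S q (Cn (cs!i))) (r (Node cs')) (map r cs')"
        using full_mode_ranks_sred[OF S full_mlrank_imp_full_mode_ranks] full subtrees_self[of "Node cs'"]
        unfolding q_def Node by simp
      with IH Node wf full have aug: "\<forall>j<length cs'. augments (MI n (leaves (cs'!j))) (Xs'!j) (rs'!j)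
          (X0 Cn Ul r (cs'!j)) (r (cs'!j))"
        by blast
      note sub = integ_NodeD[OF child]
      have "augments (MI n (\<Union>(set (map leaves cs')))) (comb Qh Xs' rs' (map leaves cs')) (rh!i)
          (comb (Cn (cs!i)) (map (X0 Cn Ul r) cs') (map r cs') (map leaves cs')) q"
        by (rule augments_comb[OF _ _ _ _ _ _ _ sub(3) _ _ _ S])
           (use wf aug sub(1,2) orthQ spanQ in \<open>auto simp: finite_leaves disjoint_family_on_def\<close>)
      then show ?thesis
        using Xh_i Node unfolding q_def by simp
    qed
  qed
qed

section \<open>Conservation of energy\<close>

lemma linear_op_sum:
  fixes H :: "(midx \<Rightarrow> complex) \<Rightarrow> midx \<Rightarrow> complex"
  assumes add: "\<forall>Y Z. H (\<lambda>a. Y a + Z a) = (\<lambda>a. H Y a + H Z a)"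
    and hom: "\<forall>c Y. H (\<lambda>a. c * Y a) = (\<lambda>a. c * H Y a)"
    and "finite A"
  shows "H (\<lambda>a. \<Sum>c\<in>A. f c * b c a) = (\<lambda>a. \<Sum>c\<in>A. f c * H (b c) a)"
  using \<open>finite A\<close>
proof (induction A rule: finite_induct)
  case empty
  show ?case
    using hom[rule_format, of 0 "\<lambda>a. 0"] by simp
next
  case (insert x A)
  have "H (\<lambda>a. \<Sum>c\<in>insert x A. f c * b c a) = H (\<lambda>a. f x * b x a + (\<Sum>c\<in>A. f c * b c a))"
    using insert by simp
  also have "\<dots> = (\<lambda>a. f x * H (b x) a + (\<Sum>c\<in>A. f c * H (b c) a))"
    using add hom insert.IH by simp
  finally show ?case
    using insert by simp
qed

lemma energy_const_galerkin:
  fixes H :: "(midx \<Rightarrow> complex) \<Rightarrow> midx \<Rightarrow> complex"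
    and b :: "midx \<Rightarrow> midx \<Rightarrow> complex" and Ch :: "real \<Rightarrow> midx \<Rightarrow> complex"
  assumes add: "\<forall>Y Z. H (\<lambda>a. Y a + Z a) = (\<lambda>a. H Y a + H Z a)"
    and hom: "\<forall>c Y. H (\<lambda>a. c * Y a) = (\<lambda>a. c * H Y a)"
    and selfadj: "\<forall>Y Z. inner_on M (H Y) Z = inner_on M Y (H Z)"
    and "finite Cs" "t0 \<le> t1"
    and deriv: "\<forall>t\<in>{t0..t1}. \<forall>c\<in>Cs. ((\<lambda>s. Ch s c) has_vector_derivative
          - \<i> * (\<Sum>a\<in>M. H (\<lambda>a'. \<Sum>c'\<in>Cs. Ch t c' * b c' a') a * cnj (b c a))) (at t within {t0..t1})"
  shows "energy M H (\<lambda>a. \<Sum>c\<in>Cs. Ch t1 c * b c a) = energy M H (\<lambda>a. \<Sum>c\<in>Cs. Ch t0 c * b c a)"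
proof -
  define Y where "Y t = (\<lambda>a. \<Sum>c\<in>Cs. Ch t c * b c a)" for t
  define w where "w t c = (\<Sum>a\<in>M. H (Y t) a * cnj (b c a))" for t c
  have HY: "H (Y t) = (\<lambda>a. \<Sum>c\<in>Cs. Ch t c * H (b c) a)" for t
    unfolding Y_def using linear_op_sum[OF add hom \<open>finite Cs\<close>] .
  define E where "E t = (\<Sum>a\<in>M. cnj (Y t a) * (\<Sum>c\<in>Cs. Ch t c * H (b c) a))" for t
  have "(E has_vector_derivative 0) (at t within {t0..t1})" if t: "t \<in> {t0..t1}" for t
  proof -
    define D where "D c = - \<i> * w t c" for c
    define Y' where "Y' = (\<lambda>a. \<Sum>c\<in>Cs. D c * b c a)"
    have "((\<lambda>s. Ch s c) has_vector_derivative D c) (at t within {t0..t1})" if "c \<in> Cs" for c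
      using deriv t that unfolding D_def w_def Y_def by auto
    then have "(E has_vector_derivative
        (\<Sum>a\<in>M. cnj (Y t a) * (\<Sum>c\<in>Cs. D c * H (b c) a) + cnj (Y' a) * (\<Sum>c\<in>Cs. Ch t c * H (b c) a)))
        (at t within {t0..t1})"
      unfolding E_def Y_def Y'_def
      by (auto intro!: derivative_eq_intros simp: sum_distrib_right sum.distrib)
    moreover have "(\<Sum>a\<in>M. cnj (Y t a) * (\<Sum>c\<in>Cs. D c * H (b c) a)) = (\<Sum>c\<in>Cs. D c * cnj (w t c))"
    proof -
      have "H Y' = (\<lambda>a. \<Sum>c\<in>Cs. D c * H (b c) a)"
        unfolding Y'_def using linear_op_sum[OF add hom \<open>finite Cs\<close>] .
      then have "(\<Sum>a\<in>M. cnj (Y t a) * (\<Sum>c\<in>Cs. D c * H (b c) a)) = inner_on M (H (Y t)) Y'"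
        using selfadj unfolding inner_on_def by metis
      also have "\<dots> = (\<Sum>c\<in>Cs. D c * cnj (w t c))"
        unfolding inner_on_def Y'_def w_def
        by (simp add: sum_distrib_left sum_distrib_right mult_ac sum.swap[of _ M])
      finally show ?thesis .
    qed
    moreover have "(\<Sum>a\<in>M. cnj (Y' a) * (\<Sum>c\<in>Cs. Ch t c * H (b c) a)) = (\<Sum>c\<in>Cs. cnj (D c) * w t c)"
      unfolding Y'_def w_def HY
      by (simp add: sum_distrib_left sum_distrib_right mult_ac sum.swap[of _ M])
    moreover have "(\<Sum>c\<in>Cs. D c * cnj (w t c)) + (\<Sum>c\<in>Cs. cnj (D c) * w t c) = 0"
      unfolding sum.distrib[symmetric] D_def by simp
    ultimately show ?thesis
      by (simp add: sum.distrib)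
  qed
  then obtain k where "\<And>t. t \<in> {t0..t1} \<Longrightarrow> E t = k"
    using has_vector_derivative_zero_constant[of "{t0..t1}" E] by auto
  with \<open>t0 \<le> t1\<close> have "E t1 = E t0" by simp
  moreover have "energy M H (Y t) = E t" for t
    unfolding energy_def inner_on_def E_def HY ..
  ultimately show ?thesis
    unfolding Y_def by simp
qed

lemma energy_comb_galerkin:
  fixes H :: "(midx \<Rightarrow> complex) \<Rightarrow> midx \<Rightarrow> complex"
  assumes add: "\<forall>Y Z. H (\<lambda>a. Y a + Z a) = (\<lambda>a. H Y a + H Z a)"
    and hom: "\<forall>c Y. H (\<lambda>a. c * Y a) = (\<lambda>a. c * H Y a)"
    and selfadj: "\<forall>Y Z. inner_on (MI n (\<Union>(set Ls))) (H Y) Z = inner_on (MI n (\<Union>(set Ls))) Y (H Z)"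
    and len: "length Xs = length Ls"
    and sol: "solves Ch (\<lambda>t Cc. proj n (\<lambda>k a. - \<i> * H (comb Cc Xs rs Ls 0) a) Xs Ls)
                t0 t1 C0 1 (MI (\<lambda>i. rs!i) {..<length Xs})"
    and "t0 \<le> t1"
  shows "energy (MI n (\<Union>(set Ls))) H (comb (Ch t1) Xs rs Ls 0)
       = energy (MI n (\<Union>(set Ls))) H (comb C0 Xs rs Ls 0)"
proof -
  define Cs where "Cs = MI (\<lambda>i. rs!i) {..<length Xs}"
  define b where "b c a = (\<Prod>i<length Xs. (Xs!i) (c i) (restrict a (Ls!i)))" for c a
  have comb_eq: "comb Cc Xs rs Ls 0 = (\<lambda>a. \<Sum>c\<in>Cs. Cc 0 c * b c a)" for Cc
    unfolding comb_def Cs_def b_def ..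
  have "\<forall>t\<in>{t0..t1}. \<forall>c\<in>Cs. ((\<lambda>s. Ch s 0 c) has_vector_derivative
      - \<i> * (\<Sum>a\<in>MI n (\<Union>(set Ls)). H (\<lambda>a'. \<Sum>c'\<in>Cs. Ch t 0 c' * b c' a') a * cnj (b c a)))
      (at t within {t0..t1})"
    using sol unfolding solves_def proj_def comb_eq Cs_def b_def
    by (simp add: sum_distrib_left mult_ac)
  from energy_const_galerkin[OF add hom selfadj _ \<open>t0 \<le> t1\<close> this]
  have "energy (MI n (\<Union>(set Ls))) H (comb (Ch t1) Xs rs Ls 0)
      = energy (MI n (\<Union>(set Ls))) H (comb (Ch t0) Xs rs Ls 0)"
    unfolding comb_eq Cs_def by (simp add: finite_MI)
  also have "comb (Ch t0) Xs rs Ls 0 = comb C0 Xs rs Ls 0"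
    using sol unfolding solves_def by (intro ext comb_cong) simp
  finally show ?thesis .
qed

text \<open>\<open>H\<close> acts on functions of all multi-indices, so a priori \<open>H Y\<close> on \<open>M\<close> depends on \<open>Y\<close>
  outside \<open>M\<close>. Self-adjointness on \<open>M\<close> excludes this: if \<open>D\<close> vanishes on \<open>M\<close> then
  \<open>\<langle>H D, H D\<rangle> = \<langle>D, H (H D)\<rangle> = 0\<close>.\<close>

lemma energy_eq_if_eq_on:
  fixes H :: "(midx \<Rightarrow> complex) \<Rightarrow> midx \<Rightarrow> complex"
  assumes add: "\<forall>Y Z. H (\<lambda>a. Y a + Z a) = (\<lambda>a. H Y a + H Z a)"
    and selfadj: "\<forall>Y Z. inner_on M (H Y) Z = inner_on M Y (H Z)"
    and "finite M"
    and eq: "\<forall>a\<in>M. Y a = Z a"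
  shows "energy M H Y = energy M H Z"
proof -
  define D where "D a = Y a - Z a" for a
  have HY: "H Y = (\<lambda>a. H Z a + H D a)"
    using add[rule_format, of Z D] unfolding D_def by simp
  have "complex_of_real (\<Sum>a\<in>M. (cmod (H D a))\<^sup>2) = inner_on M (H D) (H D)"
    unfolding inner_on_def of_real_sum by (intro sum.cong refl) (metis complex_norm_square mult.commute)
  also have "\<dots> = inner_on M D (H (H D))"
    using selfadj by blast
  also have "\<dots> = 0"
    unfolding inner_on_def D_def using eq by simp
  finally have "(\<Sum>a\<in>M. (cmod (H D a))\<^sup>2) = 0"
    by (simp only: of_real_eq_0_iff)
  with \<open>finite M\<close> have "\<forall>a\<in>M. H D a = 0"
    by (simp add: sum_nonneg_eq_0_iff)
  with eq show ?thesis
    unfolding energy_def inner_on_def HY by simp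
qed

theorem theorem6p3:
  fixes d :: nat and n :: "nat \<Rightarrow> nat" and tau :: tree and cs :: "tree list"
    and r :: "tree \<Rightarrow> nat" and Cn :: "tree \<Rightarrow> gten" and Ul :: "nat \<Rightarrow> nat \<Rightarrow> nat \<Rightarrow> complex"
    and H :: "(midx \<Rightarrow> complex) \<Rightarrow> (midx \<Rightarrow> complex)"
    and t0 t1 :: real and C1 C0 :: gten and Xh :: "gten list" and rh :: "nat list"
  assumes tree: "wf_tree tau" "leaves tau = {1..d}" "tau = Node cs"
    and root_rank: "r tau = 1"
    and orthonormal: "\<forall>\<sigma>\<in>subtrees tau. \<sigma> \<noteq> tau \<longrightarrow> orth (MI n (leaves \<sigma>)) (X0 Cn Ul r \<sigma>) (r \<sigma>)"
    and full_rank: "\<forall>cs'. Node cs' \<in> subtrees tau \<longrightarrow> full_mlrank (Cn (Node cs')) (r (Node cs')) (map r cs')"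
    and linear: "\<forall>Y Z. H (\<lambda>a. Y a + Z a) = (\<lambda>a. H Y a + H Z a)"
                "\<forall>c Y. H (\<lambda>a. c * Y a) = (\<lambda>a. c * H Y a)"
    and selfadj: "\<forall>Y Z. inner_on (MI n {1..d}) (H Y) Z = inner_on (MI n {1..d}) Y (H Z)"
    and step: "t0 < t1"
    and run: "integ n Cn Ul r t0 t1 tau (Cn tau) (\<lambda>t Y k a. - \<i> * H (Y 0) a) C1 C0 Xh rh"
  shows "energy (MI n {1..d}) H (comb C1 Xh rh (map leaves cs) 0)
       = energy (MI n {1..d}) H (X0 Cn Ul r tau 0)"
proof -
  have leaves_cs: "\<Union>(set (map leaves cs)) = {1..d}"
    using tree(2,3) by simp
  note root = integ_NodeD[OF run[unfolded tree(3)]]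
  have aug: "\<forall>i<length cs. augments (MI n (leaves (cs!i))) (Xh!i) (rh!i) (X0 Cn Ul r (cs!i)) (r (cs!i))"
    using integ_augments_children[OF run[unfolded tree(3)]] tree full_rank
      full_mlrank_imp_full_mode_ranks subtrees_self[of tau] by simp
  obtain Ch where sol: "solves Ch (\<lambda>t Cc. proj n (\<lambda>k a. - \<i> * H (comb Cc Xh rh (map leaves cs) 0) a)
        Xh (map leaves cs)) t0 t1 C0 1 (MI (\<lambda>i. rh!i) {..<length Xh})" and C1: "C1 = Ch t1"
    using root(1,4) root_rank tree(3) by auto
  have "energy (MI n {1..d}) H (comb C1 Xh rh (map leaves cs) 0)
      = energy (MI n {1..d}) H (comb C0 Xh rh (map leaves cs) 0)"
    using energy_comb_galerkin[OF linear selfadj[folded leaves_cs] _ sol] root(1) step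
    unfolding C1 leaves_cs by simp
  also have "\<dots> = energy (MI n {1..d}) H (X0 Cn Ul r tau 0)"
  proof (rule energy_eq_if_eq_on[OF linear(1) selfadj finite_MI[OF finite_atLeastAtMost]], intro ballI)
    fix a assume a: "a \<in> MI n {1..d}"
    have "comb C0 Xh rh (map leaves cs) 0 a = comb (Cn (Node cs)) (map (X0 Cn Ul r) cs) (map r cs) (map leaves cs) 0 a"
      unfolding root(3) by (rule comb_cmult_mhat[where m = "length cs"]) (use root(1,2) aug leaves_cs a in auto)
    then show "comb C0 Xh rh (map leaves cs) 0 a = X0 Cn Ul r tau 0 a"
      unfolding tree(3) by simp
  qed
  finally show ?thesis .
qed

end
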